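(* Let $m,k$ be natural numbers. If the leading term in the hereditary representation in base $k+1$ of the $k$-th term $G(k,m)$ of the Goodstein sequence $G(m)$ is of the form $a_l\cdot(k+1)^{l}$ with $1<a_l<k+1$, then $G(k+1,m)>G(k,m)$ if $l\ge 1$, and $G(k+1,m)<G(k,m)$ if $l=0$.
   Context: For a natural number base $b>1$, the hereditary representation $m\langle b\rangle$ of $m$ is $\sum_{i=0}^{l} a_i b^{i}$ with $0\le a_i<b$, $a_l\ne0$, each exponent itself written in hereditary representation in base $b$, recursively; its leading term is $a_l b^{l}$. $m\langle b\rangle''$ is obtained by syntactically replacing every $b$ by $b+1$ in $m\langle b\rangle$. The Goodstein sequence $G(m)=\{m, m''-1, (m''-1)''-1,\dots\}$ starts from $m$ in base $2$; its $n$-th term is $G(n,m)$, with $G(1,m)=m$ in base $2$, $G(k,m)$ written in base $k+1$, and $G(k+1,m)=G(k,m)\langle k+1\rangle''-1$. *)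

theory Defs
  imports Main
begin

text \<open>Hereditary base change: write n in hereditary base-b representation
  n = sum_i a_i * b^i (digits a_i = n div b^i mod b, exponents i themselves
  hereditarily represented) and syntactically replace b by b+1.
  Only indices i < n can carry nonzero digits (since b^i > i), so the sum
  ranges over i < n.\<close>
function bump :: "nat \<Rightarrow> nat \<Rightarrow> nat" where
  "bump b n = (if b < 2 then n else
     (\<Sum>i<n. (n div b ^ i mod b) * (b + 1) ^ bump b i))"
  by auto
termination by (relation "measure snd") auto

text \<open>Goodstein sequence: goodstein 1 m = m (base 2), and
  goodstein (k+1) m = bump (k+1) (goodstein k m) - 1 for k >= 1
  (goodstein k m is written in base k+1). The value at index 0 is a dummy.\<close>
fun goodstein :: "nat \<Rightarrow> nat \<Rightarrow> nat" where
  "goodstein 0 m = m"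
| "goodstein (Suc k) m = (if k = 0 then m else bump (k + 1) (goodstein k m) - 1)"

end

theory Submission
  imports Defs
begin

(* Base change replaces every digit term d * b^i of the base-b expansion by d * (b+1)^(bump b i),
   and bump b i >= i, so bump never decreases a number.  If the leading exponent l is positive,
   the leading term d * b^l even grows by at least d >= 2, which survives the subtraction of 1.
   If l = 0, the number is a single digit, the base change fixes it, and subtracting 1 decreases it. *)

declare bump.simps[simp del]

lemma less_power_self:
  fixes b :: nat
  assumes "2 \<le> b"
  shows "n < b ^ n"
proof -
  have "n < 2 ^ n" by (rule less_exp)
  also have "(2::nat) ^ n \<le> b ^ n" using assms by (rule power_mono) simp
  finally show ?thesis .
qed

lemma power_le_power_Suc_base:
  fixes b :: nat
  assumes "i \<le> j"
  shows "b ^ i \<le> (b + 1) ^ j"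
proof -
  have "b ^ i \<le> (b + 1) ^ i" by (rule power_mono) simp_all
  also have "\<dots> \<le> (b + 1) ^ j" using assms by (rule power_increasing) simp
  finally show ?thesis .
qed

lemma digit_expansion:
  fixes b :: nat
  shows "n < b ^ N \<Longrightarrow> n = (\<Sum>i<N. n div b ^ i mod b * b ^ i)"
proof (induction N arbitrary: n)
  case 0
  then show ?case by simp
next
  case (Suc N)
  then have "0 < b" by (cases b) simp_all
  with Suc.prems have "n div b < b ^ N"
    by (simp add: div_less_iff_less_mult mult.commute)
  then have IH: "n div b = (\<Sum>i<N. n div b div b ^ i mod b * b ^ i)"
    by (rule Suc.IH)
  have "(\<Sum>i<Suc N. n div b ^ i mod b * b ^ i)
      = n mod b + (\<Sum>i<N. n div b ^ Suc i mod b * b ^ Suc i)"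
    unfolding sum.lessThan_Suc_shift by simp
  also have "(\<Sum>i<N. n div b ^ Suc i mod b * b ^ Suc i)
      = b * (\<Sum>i<N. n div b div b ^ i mod b * b ^ i)"
    by (simp add: sum_distrib_left div_mult2_eq mult.assoc mult.left_commute)
  also have "n mod b + b * (\<Sum>i<N. n div b div b ^ i mod b * b ^ i) = n"
    using IH by simp
  finally show ?case by simp
qed

lemma bump_eq:
  "2 \<le> b \<Longrightarrow> bump b n = (\<Sum>i<n. n div b ^ i mod b * (b + 1) ^ bump b i)"
  by (subst bump.simps) simp

lemma bump_base_less_2: "b < 2 \<Longrightarrow> bump b n = n"
  by (subst bump.simps) simp

lemma digit_term_le_bump_term:
  "d * b ^ i \<le> d * (b + 1) ^ bump b i"
  if "i \<le> bump b i" for d b i :: nat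
  using power_le_power_Suc_base[OF that] by (rule mult_le_mono2)

lemma le_bump: "n \<le> bump b n"
proof (induction n rule: less_induct)
  case (less n)
  show ?case
  proof (cases "2 \<le> b")
    case False
    then show ?thesis by (simp add: bump_base_less_2)
  next
    case True
    have "n = (\<Sum>i<n. n div b ^ i mod b * b ^ i)"
      using less_power_self[OF True] by (rule digit_expansion)
    also have "\<dots> \<le> (\<Sum>i<n. n div b ^ i mod b * (b + 1) ^ bump b i)"
      using less.IH by (intro sum_mono digit_term_le_bump_term) simp
    also have "\<dots> = bump b n" using True by (rule bump_eq[symmetric])
    finally show ?thesis .
  qed
qed

lemma bump_ge_add_digit:
  fixes b n i :: nat
  assumes "2 \<le> b" and "0 < i"
  shows "n + n div b ^ i mod b \<le> bump b n"
proof (cases "i < n")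
  case False
  have "n < b ^ n" using assms(1) by (rule less_power_self)
  also have "\<dots> \<le> b ^ i" using False assms(1) by (intro power_increasing) auto
  finally show ?thesis by (simp add: le_bump)
next
  case True
  define d where "d = n div b ^ i mod b"
  define g where "g j = n div b ^ j mod b * b ^ j" for j
  define f where "f j = n div b ^ j mod b * (b + 1) ^ bump b j" for j
  have "b ^ i < (b + 1) ^ i" using assms by (intro power_strict_mono) auto
  also have "\<dots> \<le> (b + 1) ^ bump b i" using le_bump by (rule power_increasing) simp
  finally have "d * (b ^ i + 1) \<le> d * (b + 1) ^ bump b i"
    by (intro mult_le_mono2) simp
  then have "d * b ^ i + d \<le> d * (b + 1) ^ bump b i"
    by (simp add: distrib_left)
  then have leading: "g i + d \<le> f i" unfolding f_def g_def d_def .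
  have rest: "sum g ({..<n} - {i}) \<le> sum f ({..<n} - {i})"
    unfolding f_def g_def by (intro sum_mono digit_term_le_bump_term le_bump)
  have "n = g i + sum g ({..<n} - {i})"
    using digit_expansion[OF less_power_self[OF assms(1), of n]] True
    by (simp add: g_def sum.remove)
  moreover have "bump b n = f i + sum f ({..<n} - {i})"
    using bump_eq[OF assms(1), of n] True by (simp add: f_def sum.remove)
  ultimately show ?thesis using leading rest unfolding d_def by linarith
qed

lemma bump_less_base:
  assumes "n < b"
  shows "bump b n = n"
proof (cases "2 \<le> b")
  case False
  then show ?thesis by (simp add: bump_base_less_2)
next
  case True
  have bump_0: "bump b 0 = 0" using bump_eq[OF True, of 0] by simp
  have higher_terms: "n div b ^ i mod b * (b + 1) ^ bump b i = 0" if "i \<in> {..<n} - {0}" for i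
  proof -
    from that have "b \<le> b ^ i" using True power_increasing[of 1 i b] by simp
    then show ?thesis using assms by simp
  qed
  show ?thesis
  proof (cases "n = 0")
    case True
    then show ?thesis using bump_0 by simp
  next
    case False
    have "bump b n = (\<Sum>i<n. n div b ^ i mod b * (b + 1) ^ bump b i)"
      using \<open>2 \<le> b\<close> by (rule bump_eq)
    also have "\<dots> = n mod b * (b + 1) ^ bump b 0
        + (\<Sum>i\<in>{..<n} - {0}. n div b ^ i mod b * (b + 1) ^ bump b i)"
      using False by (simp add: sum.remove)
    also have "(\<Sum>i\<in>{..<n} - {0}. n div b ^ i mod b * (b + 1) ^ bump b i) = 0"
      using higher_terms by (intro sum.neutral) blast
    finally show ?thesis using assms bump_0 by simp
  qed
qed

theorem lemma3:
  fixes m k l a :: nat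
  assumes "(k + 1) ^ l \<le> goodstein k m"
    and "goodstein k m < (k + 1) ^ Suc l"
    and "a = goodstein k m div (k + 1) ^ l"
    and "1 < a" and "a < k + 1"
  shows "(l \<ge> 1 \<longrightarrow> goodstein (k + 1) m > goodstein k m) \<and>
         (l = 0 \<longrightarrow> goodstein (k + 1) m < goodstein k m)"
proof -
  \<comment> \<open>The bounds on the leading power are implied by the other hypotheses and not used.\<close>
  define n where "n = goodstein k m"
  define b where "b = k + 1"
  have "2 \<le> b" using assms(4,5) by (simp add: b_def)
  have step: "goodstein (k + 1) m = bump b n - 1"
    using \<open>2 \<le> b\<close> by (simp add: n_def b_def)
  have leading_digit: "n div b ^ l mod b = a"
    using assms(3,5) by (simp add: n_def b_def)
  show ?thesis
  proof (intro conjI impI)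
    assume "1 \<le> l"
    then have "n + a \<le> bump b n"
      using bump_ge_add_digit[OF \<open>2 \<le> b\<close>, of l n] leading_digit by simp
    then show "goodstein (k + 1) m > goodstein k m"
      using step assms(4) by (simp add: n_def)
  next
    assume "l = 0"
    then have "n = a" using assms(3) by (simp add: n_def)
    then have "bump b n = n" using assms(5) by (intro bump_less_base) (simp add: b_def)
    then show "goodstein (k + 1) m < goodstein k m"
      using step \<open>n = a\<close> assms(4) by (simp add: n_def)
  qed
qed

end
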